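(* Let $A$ be a countable non-empty set of players, $\mathbf{n}\notin A$ an additional "nature" position owner, $C$ a finite non-empty set of choices, $d:C^*\to A\cup\{\mathbf{n}\}$, $P$ a function assigning to every $w\in d^{-1}(\{\mathbf{n}\})$ a probability distribution $P(w)$ on $C$, and for every $a\in A$ let $f_a:C^\omega\to[0,1]$ be continuous (product of discrete topologies on $C^\omega$). Then the stochastic infinite sequential game $\langle A,C,d,(f_a)_{a\in A},P\rangle$ has a subgame perfect equilibrium.
   Context: A strategy of player $a\in A$ is a function $s_a:d^{-1}(\{a\})\to C$; a strategy profile is a family of strategies, one per player. Given a profile $\sigma$ and a history $\gamma\in C^*$, the induced probability distribution on plays in $\gamma C^\omega$ is obtained by following $\gamma$, then at each history $w$ with $d(w)=a\in A$ choosing $\sigma_a(w)$, and at each history $w$ with $d(w)=\mathbf{n}$ choosing the next element at random according to $P(w)$ (independently). The payoff of player $a$ from $\gamma$ under $\sigma$ is the expected value of $f_a$ under this distribution. A profile $\sigma$ is a subgame perfect equilibrium if for no $\gamma\in C^*$, player $a$ and strategy $s_a$ of $a$ does replacing $\sigma_a$ by $s_a$ strictly increase the expected payoff of $a$ from $\gamma$. *)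

theory Defs
  imports "HOL-Probability.Probability"
begin

(* Conventions:
   - choices C = the finite (nonempty) type 'c; histories C* = 'c list; plays C^omega = nat => 'c
   - position owners A + {nature} = 'a option, with None = nature n and Some a = player a ('a countable)
   - d :: 'c list => 'a option
   - P :: 'c list => 'c pmf  (only the values at nature positions matter)
   - a strategy profile is sigma :: 'a => 'c list => 'c (only values on d^-1({Some a}) matter)
   Randomness: an independent draw X w ~ P w for every history w (product measure on
   'c list => 'c).  Since every history is visited at most once along a play, the induced
   distribution on plays is exactly the one described in the paper. *)

definition next_move ::
  "('c list \<Rightarrow> 'a option) \<Rightarrow> ('a \<Rightarrow> 'c list \<Rightarrow> 'c) \<Rightarrow> ('c list \<Rightarrow> 'c) \<Rightarrow> 'c list \<Rightarrow> 'c" where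
  "next_move d \<sigma> X w = (case d w of None \<Rightarrow> X w | Some a \<Rightarrow> \<sigma> a w)"

primrec hist ::
  "('c list \<Rightarrow> 'a option) \<Rightarrow> ('a \<Rightarrow> 'c list \<Rightarrow> 'c) \<Rightarrow> 'c list \<Rightarrow> ('c list \<Rightarrow> 'c) \<Rightarrow> nat \<Rightarrow> 'c list" where
  "hist d \<sigma> \<gamma> X 0 = \<gamma>"
| "hist d \<sigma> \<gamma> X (Suc k) = hist d \<sigma> \<gamma> X k @ [next_move d \<sigma> X (hist d \<sigma> \<gamma> X k)]"

definition play ::
  "('c list \<Rightarrow> 'a option) \<Rightarrow> ('a \<Rightarrow> 'c list \<Rightarrow> 'c) \<Rightarrow> 'c list \<Rightarrow> ('c list \<Rightarrow> 'c) \<Rightarrow> nat \<Rightarrow> 'c" where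
  "play d \<sigma> \<gamma> X n = hist d \<sigma> \<gamma> X (Suc n) ! n"

definition nature_measure :: "('c list \<Rightarrow> 'c pmf) \<Rightarrow> ('c list \<Rightarrow> 'c) measure" where
  "nature_measure P = (\<Pi>\<^sub>M w\<in>UNIV. measure_pmf (P w))"

definition payoff ::
  "('c list \<Rightarrow> 'a option) \<Rightarrow> ('c list \<Rightarrow> 'c pmf) \<Rightarrow> ('a \<Rightarrow> (nat \<Rightarrow> 'c) \<Rightarrow> real)
    \<Rightarrow> ('a \<Rightarrow> 'c list \<Rightarrow> 'c) \<Rightarrow> 'c list \<Rightarrow> 'a \<Rightarrow> real" where
  "payoff d P f \<sigma> \<gamma> a = (\<integral>X. f a (play d \<sigma> \<gamma> X) \<partial>nature_measure P)"

definition subgame_perfect ::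
  "('c list \<Rightarrow> 'a option) \<Rightarrow> ('c list \<Rightarrow> 'c pmf) \<Rightarrow> ('a \<Rightarrow> (nat \<Rightarrow> 'c) \<Rightarrow> real)
    \<Rightarrow> ('a \<Rightarrow> 'c list \<Rightarrow> 'c) \<Rightarrow> bool" where
  "subgame_perfect d P f \<sigma> \<longleftrightarrow>
     (\<forall>\<gamma> a s. \<not> (payoff d P f (\<sigma>(a := s)) \<gamma> a > payoff d P f \<sigma> \<gamma> a))"

definition plays_topology :: "(nat \<Rightarrow> 'c) topology" where
  "plays_topology = product_topology (\<lambda>_. discrete_topology UNIV) UNIV"

end

theory Submission
  imports Defs
begin

text \<open>
  Fix finitely many players \<open>F\<close> and \<open>\<epsilon> > 0\<close>. Continuous payoffs on the compact space of plays
  are uniformly continuous, so beyond some horizon \<open>N\<close> the payoff of each player in \<open>F\<close> is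
  determined up to \<open>\<epsilon>/2\<close>; backward induction in the game cut off at depth \<open>N\<close>
  therefore yields a profile from which no player in \<open>F\<close> gains more than \<open>\<epsilon>\<close> by deviating
  in any subgame. Expected payoffs depend continuously on the profile in the product of
  discrete topologies, so the sets of such \<open>\<epsilon>\<close>-equilibria are closed in a compact space; they
  are nonempty and directed, hence have a common point, which is a subgame perfect equilibrium.
  Neither the countability of the set of players nor the bound \<open>f a x \<in> {0..1}\<close> is needed.
\<close>

section \<open>Histories and plays\<close>

lemma length_hist [simp]: "length (hist d \<sigma> \<gamma> X k) = length \<gamma> + k"
  by (induction k) auto

lemma hist_Suc_append: "hist d \<sigma> \<gamma> X (Suc k) = hist d \<sigma> (\<gamma> @ [next_move d \<sigma> X \<gamma>]) X k"
  by (induction k) auto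

lemma nth_hist_mono: "m \<le> k \<Longrightarrow> n < length \<gamma> + m \<Longrightarrow> hist d \<sigma> \<gamma> X k ! n = hist d \<sigma> \<gamma> X m ! n"
  by (induction k) (auto simp: nth_append le_Suc_eq)

lemma play_eq_nth_hist: "n < length \<gamma> + k \<Longrightarrow> play d \<sigma> \<gamma> X n = hist d \<sigma> \<gamma> X k ! n"
  unfolding play_def by (metis nth_hist_mono nat_le_linear add_Suc_right less_Suc_eq le_add2 less_le_trans)

lemma play_nth_prefix: "n < length \<gamma> \<Longrightarrow> play d \<sigma> \<gamma> X n = \<gamma> ! n"
  using play_eq_nth_hist[of n \<gamma> 0] by simp

lemma play_append_next_move: "play d \<sigma> (\<gamma> @ [next_move d \<sigma> X \<gamma>]) X = play d \<sigma> \<gamma> X"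
proof
  fix n
  have "play d \<sigma> (\<gamma> @ [next_move d \<sigma> X \<gamma>]) X n = hist d \<sigma> \<gamma> X (Suc (Suc n)) ! n"
    unfolding play_def hist_Suc_append ..
  also have "\<dots> = play d \<sigma> \<gamma> X n"
    by (rule play_eq_nth_hist[symmetric]) simp
  finally show "play d \<sigma> (\<gamma> @ [next_move d \<sigma> X \<gamma>]) X n = play d \<sigma> \<gamma> X n" .
qed

lemma hist_cong:
  "(\<And>w. length \<gamma> \<le> length w \<Longrightarrow> length w < length \<gamma> + k \<Longrightarrow> next_move d \<sigma> X w = next_move d \<tau> Y w)
    \<Longrightarrow> hist d \<sigma> \<gamma> X k = hist d \<tau> \<gamma> Y k"
  by (induction k) auto

lemma play_cong:
  assumes "\<And>w. length \<gamma> \<le> length w \<Longrightarrow> length w < N \<Longrightarrow> next_move d \<sigma> X w = next_move d \<tau> Y w"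
    and "n < N"
  shows "play d \<sigma> \<gamma> X n = play d \<tau> \<gamma> Y n"
proof -
  have "hist d \<sigma> \<gamma> X (N - length \<gamma>) = hist d \<tau> \<gamma> Y (N - length \<gamma>)"
    by (rule hist_cong) (use assms in auto)
  moreover have "n < length \<gamma> + (N - length \<gamma>)"
    using assms(2) by simp
  ultimately show ?thesis
    by (simp add: play_eq_nth_hist)
qed

lemma play_fun_upd_shorter:
  assumes "length w < length \<gamma>"
  shows "play d \<sigma> \<gamma> (X(w := c)) = play d \<sigma> \<gamma> X"
proof -
  have "hist d \<sigma> \<gamma> (X(w := c)) k = hist d \<sigma> \<gamma> X k" for k
    by (rule hist_cong) (use assms in \<open>auto simp: next_move_def split: option.split\<close>)
  then show ?thesis
    unfolding play_def[abs_def] by (simp del: hist.simps)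
qed

section \<open>The topology of plays\<close>

lemma openin_agree_finite:
  assumes "finite J" and cont: "\<And>j. j \<in> J \<Longrightarrow> continuous_map X (discrete_topology UNIV) (g j)"
  shows "openin X {x \<in> topspace X. \<forall>j\<in>J. g j x = g j x0}"
proof -
  have "{x \<in> topspace X. \<forall>j\<in>J. g j x = g j x0} = (\<Inter>j\<in>J. {x \<in> topspace X. g j x \<in> {g j x0}}) \<inter> topspace X"
    by auto
  also have "openin X \<dots>"
  proof (rule openin_INT[OF \<open>finite J\<close>])
    fix j
    assume "j \<in> J"
    show "openin X {x \<in> topspace X. g j x \<in> {g j x0}}"
      by (rule openin_continuous_map_preimage[OF cont[OF \<open>j \<in> J\<close>]]) simp
  qed
  finally show ?thesis .
qed

lemma topspace_plays_topology [simp]: "topspace plays_topology = UNIV"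
  by (simp add: plays_topology_def)

lemma continuous_map_plays_coordinate:
  "continuous_map plays_topology (discrete_topology UNIV) (\<lambda>y. y i)"
  using continuous_map_product_projection[of i UNIV "\<lambda>_. discrete_topology UNIV"]
  by (simp add: plays_topology_def)

lemma compact_space_plays_topology: "compact_space (plays_topology :: (nat \<Rightarrow> 'c::finite) topology)"
  by (simp add: plays_topology_def compact_space_product_topology compact_space_discrete_topology)

lemma openin_plays_cylinder: "openin plays_topology {y. \<forall>i<n. y i = x i}"
  using openin_agree_finite[of "{..<n}" plays_topology "\<lambda>i y. y i" x]
  by (simp add: continuous_map_plays_coordinate Ball_def)

lemma plays_cylinder_subset_openin:
  assumes "openin plays_topology U" and "x \<in> U"
  shows "\<exists>n. {y. \<forall>i<n. y i = x i} \<subseteq> U"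
proof -
  obtain V where V: "finite {i. V i \<noteq> UNIV}" "x \<in> PiE UNIV V" "PiE UNIV V \<subseteq> U"
    using assms unfolding plays_topology_def openin_product_topology_alt by auto
  obtain n where n: "{i. V i \<noteq> UNIV} \<subseteq> {..<n}"
    using finite_nat_bounded[OF V(1)] by blast
  have "{y. \<forall>i<n. y i = x i} \<subseteq> PiE UNIV V"
  proof
    fix y
    assume y: "y \<in> {y. \<forall>i<n. y i = x i}"
    have "y i \<in> V i" for i
    proof (cases "V i = UNIV")
      case False
      then have "i < n"
        using n by blast
      then show ?thesis
        using y V(2) by (simp add: PiE_iff)
    qed simp
    then show "y \<in> PiE UNIV V"
      by (simp add: PiE_iff)
  qed
  with V(3) show ?thesis
    by blast
qed

lemma bounded_range_continuous_plays:
  fixes g :: "(nat \<Rightarrow> 'c::finite) \<Rightarrow> real"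
  assumes "continuous_map plays_topology euclideanreal g"
  shows "bounded (range g)"
proof -
  have "compactin euclideanreal (g ` topspace plays_topology)"
    using image_compactin compact_space_plays_topology[unfolded compact_space_def] assms .
  then show ?thesis
    by (simp add: compact_imp_bounded)
qed

lemma continuous_plays_cylinder_near:
  fixes g :: "(nat \<Rightarrow> 'c::finite) \<Rightarrow> real"
  assumes "continuous_map plays_topology euclideanreal g" and "e > 0"
  shows "\<exists>n. \<forall>y. (\<forall>i<n. y i = x i) \<longrightarrow> \<bar>g y - g x\<bar> < e"
proof -
  have "\<exists>U. openin plays_topology U \<and> x \<in> U \<and> (\<forall>y\<in>U. g y \<in> ball (g x) e)"
    using assms unfolding mtopology_is_euclidean[symmetric] Met_TC.continuous_map_to_metric
    by simp
  then obtain U where U: "openin plays_topology U" "x \<in> U" "\<And>y. y \<in> U \<Longrightarrow> \<bar>g y - g x\<bar> < e"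
    by (auto simp: dist_real_def abs_minus_commute)
  obtain n where "{y. \<forall>i<n. y i = x i} \<subseteq> U"
    using plays_cylinder_subset_openin[OF U(1,2)] by blast
  with U(3) show ?thesis
    by blast
qed

lemma continuous_plays_uniformly:
  fixes g :: "(nat \<Rightarrow> 'c::finite) \<Rightarrow> real"
  assumes g: "continuous_map plays_topology euclideanreal g" and "e > 0"
  shows "\<exists>N. \<forall>x y. (\<forall>i<N. x i = y i) \<longrightarrow> \<bar>g x - g y\<bar> < e"
proof -
  have "\<forall>x. \<exists>n. \<forall>y. (\<forall>i<n. y i = x i) \<longrightarrow> \<bar>g y - g x\<bar> < e/2"
    using continuous_plays_cylinder_near[OF g, of "e/2"] \<open>e > 0\<close> by simp
  then obtain n where n: "\<And>x y. \<forall>i<n x. y i = x i \<Longrightarrow> \<bar>g y - g x\<bar> < e/2"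
    by (metis choice)
  define cyl where "cyl x = {y. \<forall>i<n x. y i = x i}" for x :: "nat \<Rightarrow> 'c"
  have "\<forall>U\<in>range cyl. openin plays_topology U"
    by (simp add: cyl_def openin_plays_cylinder)
  moreover have "topspace plays_topology \<subseteq> \<Union>(range cyl)"
    by (auto simp: cyl_def)
  ultimately obtain \<F> where F: "finite \<F>" "\<F> \<subseteq> range cyl" "topspace plays_topology \<subseteq> \<Union>\<F>"
    using compact_space_plays_topology[unfolded compact_space_alt, rule_format, of "range cyl"]
    by blast
  obtain B where B: "finite B" "\<F> = cyl ` B"
    using finite_subset_image[OF F(1,2)] by blast
  obtain N where N: "n ` B \<subseteq> {..<N}"
    using finite_nat_bounded[OF finite_imageI[OF B(1)]] by blast
  show ?thesis
  proof (intro exI allI impI)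
    fix y z :: "nat \<Rightarrow> 'c"
    assume yz: "\<forall>i<N. y i = z i"
    obtain x where x: "x \<in> B" "y \<in> cyl x"
      using F(3) B(2) by auto
    then have "n x < N"
      using N by blast
    then have "z \<in> cyl x"
      using x(2) yz by (simp add: cyl_def)
    then have "\<bar>g z - g x\<bar> < e/2" and "\<bar>g y - g x\<bar> < e/2"
      using n x(2) by (simp_all add: cyl_def)
    then show "\<bar>g y - g z\<bar> < e"
      by linarith
  qed
qed

lemma continuous_plays_uniformly_finite:
  fixes f :: "'a \<Rightarrow> (nat \<Rightarrow> 'c::finite) \<Rightarrow> real"
  assumes "finite F" and "\<And>a. a \<in> F \<Longrightarrow> continuous_map plays_topology euclideanreal (f a)" and "e > 0"
  shows "\<exists>N. \<forall>a\<in>F. \<forall>x y. (\<forall>i<N. x i = y i) \<longrightarrow> \<bar>f a x - f a y\<bar> < e"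
proof -
  have "\<forall>a\<in>F. \<exists>N. \<forall>x y. (\<forall>i<N. x i = y i) \<longrightarrow> \<bar>f a x - f a y\<bar> < e"
    using continuous_plays_uniformly[OF assms(2) \<open>e > 0\<close>] by blast
  then obtain M where M: "\<And>a x y. a \<in> F \<Longrightarrow> \<forall>i<M a. x i = y i \<Longrightarrow> \<bar>f a x - f a y\<bar> < e"
    by (metis bchoice)
  obtain N where N: "M ` F \<subseteq> {..<N}"
    using finite_nat_bounded[OF finite_imageI[OF \<open>finite F\<close>]] by blast
  show ?thesis
  proof (intro exI ballI allI impI)
    fix a and x y :: "nat \<Rightarrow> 'c"
    assume "a \<in> F" and xy: "\<forall>i<N. x i = y i"
    then have "M a < N"
      using N by blast
    with xy have "\<forall>i<M a. x i = y i"
      by simp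
    with \<open>a \<in> F\<close> show "\<bar>f a x - f a y\<bar> < e"
      by (rule M)
  qed
qed

section \<open>Expected payoffs\<close>

definition pad_history :: "'c list \<Rightarrow> nat \<Rightarrow> 'c" where
  "pad_history w n = (if n < length w then w ! n else undefined)"

lemma space_nature_measure [simp]: "space (nature_measure P) = UNIV"
  by (simp add: nature_measure_def space_PiM)

lemma prob_space_nature_measure: "prob_space (nature_measure P)"
  unfolding nature_measure_def by (rule prob_space_PiM) (simp add: prob_space_measure_pmf)

lemma measurable_nature_draw: "(\<lambda>X. X w) \<in> measurable (nature_measure P) (count_space UNIV)"
proof -
  have "(\<lambda>X. X w) \<in> measurable (nature_measure P) (measure_pmf (P w))"
    unfolding nature_measure_def by (rule measurable_component_singleton) simp
  then show ?thesis
    by (simp add: measurable_cong_sets)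
qed

lemma measurable_next_move: "(\<lambda>X. next_move d \<sigma> X w) \<in> measurable (nature_measure P) (count_space UNIV)"
  unfolding next_move_def by (cases "d w") (simp_all add: measurable_nature_draw)

lemma measurable_hist:
  fixes d :: "'c::countable list \<Rightarrow> 'a option"
  shows "(\<lambda>X. hist d \<sigma> \<gamma> X k) \<in> measurable (nature_measure P) (count_space UNIV)"
proof (induction k)
  case (Suc k)
  have "(\<lambda>X. hist d \<sigma> \<gamma> X k @ [next_move d \<sigma> X (hist d \<sigma> \<gamma> X k)])
          \<in> measurable (nature_measure P) (count_space UNIV)"
  proof (rule measurable_compose_countable'[OF _ Suc, where f = "\<lambda>l X. l @ [next_move d \<sigma> X l]"])
    fix l :: "'c list"
    show "(\<lambda>X. l @ [next_move d \<sigma> X l]) \<in> measurable (nature_measure P) (count_space UNIV)"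
      using measurable_comp[OF measurable_next_move measurable_count_space, where g = "\<lambda>c. l @ [c]"]
      by (simp add: comp_def)
  qed simp
  then show ?case
    by simp
qed simp

lemma borel_measurable_continuous_play:
  fixes d :: "'c::finite list \<Rightarrow> 'a option"
  assumes g: "continuous_map plays_topology euclideanreal g"
  shows "(\<lambda>X. g (play d \<sigma> \<gamma> X)) \<in> borel_measurable (nature_measure P)"
proof (rule borel_measurable_LIMSEQ_real)
  show "(\<lambda>X. g (pad_history (hist d \<sigma> \<gamma> X N))) \<in> borel_measurable (nature_measure P)" for N
    using measurable_comp[OF measurable_hist borel_measurable_count_space] by (simp add: comp_def)
  fix X
  show "(\<lambda>N. g (pad_history (hist d \<sigma> \<gamma> X N))) \<longlonglongrightarrow> g (play d \<sigma> \<gamma> X)"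
  proof (rule LIMSEQ_I)
    fix r :: real
    assume "r > 0"
    then obtain N0 where N0: "\<And>x y. \<forall>i<N0. x i = y i \<Longrightarrow> \<bar>g x - g y\<bar> < r"
      using continuous_plays_uniformly[OF g] by blast
    have pad: "pad_history (hist d \<sigma> \<gamma> X N) i = play d \<sigma> \<gamma> X i" if "i < N" for i N
      using that by (simp add: pad_history_def play_eq_nth_hist[of i \<gamma> N])
    have "norm (g (pad_history (hist d \<sigma> \<gamma> X N)) - g (play d \<sigma> \<gamma> X)) < r" if "N0 \<le> N" for N
    proof -
      have "\<forall>i<N0. pad_history (hist d \<sigma> \<gamma> X N) i = play d \<sigma> \<gamma> X i"
        using that pad by auto
      then show ?thesis
        using N0 by simp
    qed
    then show "\<exists>N0. \<forall>N\<ge>N0. norm (g (pad_history (hist d \<sigma> \<gamma> X N)) - g (play d \<sigma> \<gamma> X)) < r"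
      by blast
  qed
qed

lemma integrable_continuous_play:
  fixes d :: "'c::finite list \<Rightarrow> 'a option"
  assumes g: "continuous_map plays_topology euclideanreal g"
  shows "integrable (nature_measure P) (\<lambda>X. g (play d \<sigma> \<gamma> X))"
proof -
  interpret prob_space "nature_measure P"
    by (rule prob_space_nature_measure)
  obtain B where "\<And>x. \<bar>g x\<bar> \<le> B"
    using bounded_range_continuous_plays[OF g] by (auto simp: bounded_iff)
  then show ?thesis
    by (intro integrable_const_bound[where B = B] AE_I2 borel_measurable_continuous_play[OF g]) simp
qed

lemma (in prob_space) abs_integral_diff_le:
  fixes g h :: "'a \<Rightarrow> real"
  assumes "integrable M g" "integrable M h" and "\<And>x. x \<in> space M \<Longrightarrow> \<bar>g x - h x\<bar> \<le> e"
  shows "\<bar>(\<integral>x. g x \<partial>M) - (\<integral>x. h x \<partial>M)\<bar> \<le> e"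
proof -
  have "(\<integral>x. g x \<partial>M) - (\<integral>x. h x \<partial>M) = (\<integral>x. g x - h x \<partial>M)"
    using assms(1,2) by simp
  moreover have "(\<integral>x. g x - h x \<partial>M) \<le> e" and "- e \<le> (\<integral>x. g x - h x \<partial>M)"
    using assms(3) by (intro integral_le_const integral_ge_const Bochner_Integration.integrable_diff
        assms(1,2) AE_I2; force simp: abs_le_iff)+
  ultimately show ?thesis
    by linarith
qed

lemma abs_payoff_diff_le:
  fixes d :: "'c::finite list \<Rightarrow> 'a option"
  assumes "continuous_map plays_topology euclideanreal (f a)"
    and "\<And>X. \<bar>f a (play d \<sigma> \<gamma> X) - f a (play d \<tau> \<gamma>' X)\<bar> \<le> e"
  shows "\<bar>payoff d P f \<sigma> \<gamma> a - payoff d P f \<tau> \<gamma>' a\<bar> \<le> e"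
  unfolding payoff_def
  using prob_space_nature_measure
  by (rule prob_space.abs_integral_diff_le) (simp_all add: assms integrable_continuous_play)

lemma abs_payoff_diff_const_le:
  fixes d :: "'c::finite list \<Rightarrow> 'a option"
  assumes "continuous_map plays_topology euclideanreal (f a)"
    and "\<And>X. \<bar>f a (play d \<sigma> \<gamma> X) - c\<bar> \<le> e"
  shows "\<bar>payoff d P f \<sigma> \<gamma> a - c\<bar> \<le> e"
proof -
  interpret prob_space "nature_measure P"
    by (rule prob_space_nature_measure)
  have "\<bar>payoff d P f \<sigma> \<gamma> a - (\<integral>X. c \<partial>nature_measure P)\<bar> \<le> e"
    unfolding payoff_def
    by (rule abs_integral_diff_le) (simp_all add: assms integrable_continuous_play)
  then show ?thesis
    using prob_space by simp
qed

lemma payoff_player_move: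
  assumes "d \<gamma> = Some b"
  shows "payoff d P f \<sigma> \<gamma> a = payoff d P f \<sigma> (\<gamma> @ [\<sigma> b \<gamma>]) a"
proof -
  have "play d \<sigma> (\<gamma> @ [\<sigma> b \<gamma>]) X = play d \<sigma> \<gamma> X" for X
    using play_append_next_move[of d \<sigma> \<gamma> X] by (simp add: next_move_def assms)
  then show ?thesis
    by (simp add: payoff_def)
qed

lemma payoff_nature_move:
  fixes d :: "'c::finite list \<Rightarrow> 'a option"
  assumes cont: "continuous_map plays_topology euclideanreal (f a)" and "d \<gamma> = None"
  shows "payoff d P f \<sigma> \<gamma> a = (\<integral>c. payoff d P f \<sigma> (\<gamma> @ [c]) a \<partial>measure_pmf (P \<gamma>))"
proof -
  let ?M = "nature_measure P" and ?Q = "measure_pmf (P \<gamma>)"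
  interpret M: prob_space ?M
    by (rule prob_space_nature_measure)
  interpret pair_prob_space ?Q ?M
    by (simp add: pair_prob_space_def pair_sigma_finite_def prob_space_measure_pmf
        prob_space_imp_sigma_finite M.prob_space_axioms)
  define h where "h c X = f a (play d \<sigma> (\<gamma> @ [c]) X)" for c X
  \<comment> \<open>Redrawing nature's move at \<open>\<gamma>\<close> independently leaves the product measure unchanged,
    and the play from \<open>\<gamma> @ [c]\<close> never consults the draw at \<open>\<gamma>\<close>.\<close>
  define redraw where "redraw p = (snd p)(\<gamma> := fst p)" for p :: "'c \<times> ('c list \<Rightarrow> 'c)"
  have play_redraw: "f a (play d \<sigma> \<gamma> (redraw p)) = h (fst p) (snd p)" for p
  proof -
    have "f a (play d \<sigma> \<gamma> (redraw p)) = h (redraw p \<gamma>) (redraw p)"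
      using play_append_next_move[of d \<sigma> \<gamma> "redraw p"] \<open>d \<gamma> = None\<close>
      by (simp add: h_def next_move_def)
    also have "\<dots> = h (fst p) (snd p)"
      unfolding h_def redraw_def by (simp add: play_fun_upd_shorter)
    finally show ?thesis .
  qed
  have distr_redraw: "distr (?Q \<Otimes>\<^sub>M ?M) ?M redraw = ?M"
    using distr_pair_PiM_eq_PiM[of UNIV "\<lambda>w. measure_pmf (P w)" \<gamma>]
    unfolding nature_measure_def redraw_def
    by (simp add: prob_space_measure_pmf split_beta' insert_UNIV)
  have measurable_redraw: "redraw \<in> measurable (?Q \<Otimes>\<^sub>M ?M) ?M"
    unfolding nature_measure_def redraw_def
    by (rule measurable_fun_upd[where J = UNIV])
      (auto intro: measurable_snd[unfolded nature_measure_def] measurable_fst)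
  have "integrable (?Q \<Otimes>\<^sub>M ?M) (\<lambda>p. h (fst p) (snd p))"
    using integrable_distr_eq[OF measurable_redraw, of "\<lambda>X. f a (play d \<sigma> \<gamma> X)"]
      integrable_continuous_play[OF cont, where d = d and \<sigma> = \<sigma> and \<gamma> = \<gamma> and P = P]
    by (simp add: distr_redraw play_redraw)
  have "payoff d P f \<sigma> \<gamma> a = (\<integral>X. f a (play d \<sigma> \<gamma> X) \<partial>distr (?Q \<Otimes>\<^sub>M ?M) ?M redraw)"
    by (simp add: payoff_def distr_redraw)
  also have "\<dots> = (\<integral>p. h (fst p) (snd p) \<partial>(?Q \<Otimes>\<^sub>M ?M))"
    by (simp add: integral_distr[OF measurable_redraw borel_measurable_continuous_play[OF cont]]
        play_redraw)
  also have "\<dots> = (\<integral>c. (\<integral>X. h c X \<partial>?M) \<partial>?Q)"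
    using integral_fst'[OF \<open>integrable _ _\<close>] by simp
  finally show ?thesis
    by (simp add: payoff_def h_def)
qed

section \<open>Backward induction in the truncated game\<close>

lemma arg_max_finite_ge:
  fixes g :: "'c::finite \<Rightarrow> 'b::linorder"
  shows "g y \<le> g (arg_max g (\<lambda>_. True))"
proof -
  have "Max (range g) \<in> range g"
    by (rule Max_in) simp_all
  then obtain x where "g x = Max (range g)"
    by (metis imageE)
  then have x: "g z \<le> g x" for z
    by simp
  show ?thesis
    by (rule arg_maxI[where x = x]) (use x in \<open>auto simp: not_less\<close>)
qed

primrec backward_value ::
  "('c list \<Rightarrow> 'a option) \<Rightarrow> ('c list \<Rightarrow> 'c pmf) \<Rightarrow> ('a \<Rightarrow> (nat \<Rightarrow> 'c) \<Rightarrow> real)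
    \<Rightarrow> nat \<Rightarrow> 'c list \<Rightarrow> 'a \<Rightarrow> real" where
  "backward_value d P f 0 w a = f a (pad_history w)"
| "backward_value d P f (Suc k) w a = (case d w of
      None \<Rightarrow> \<integral>c. backward_value d P f k (w @ [c]) a \<partial>measure_pmf (P w)
    | Some b \<Rightarrow> backward_value d P f k (w @ [arg_max (\<lambda>c. backward_value d P f k (w @ [c]) b) (\<lambda>_. True)]) a)"

text \<open>
  Beyond the horizon the truncated subtraction makes this move myopic, which is harmless because
  payoffs there are already fixed up to the uniform-continuity error.
\<close>

definition backward_profile ::
  "('c list \<Rightarrow> 'a option) \<Rightarrow> ('c list \<Rightarrow> 'c pmf) \<Rightarrow> ('a \<Rightarrow> (nat \<Rightarrow> 'c) \<Rightarrow> real)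
    \<Rightarrow> nat \<Rightarrow> 'a \<Rightarrow> 'c list \<Rightarrow> 'c" where
  "backward_profile d P f N b w =
     arg_max (\<lambda>c. backward_value d P f (N - Suc (length w)) (w @ [c]) b) (\<lambda>_. True)"

lemma backward_value_Suc_player:
  "d w = Some b \<Longrightarrow> length w + Suc k = N \<Longrightarrow>
    backward_value d P f (Suc k) w a = backward_value d P f k (w @ [backward_profile d P f N b w]) a"
  by (auto simp: backward_profile_def)

lemma backward_profile_best_reply:
  fixes d :: "'c::finite list \<Rightarrow> 'a option"
  shows "length w + Suc k = N \<Longrightarrow>
    backward_value d P f k (w @ [c]) b \<le> backward_value d P f k (w @ [backward_profile d P f N b w]) b"
  unfolding backward_profile_def by (auto intro: arg_max_finite_ge)

context
  fixes d :: "'c::finite list \<Rightarrow> 'a option" and P :: "'c list \<Rightarrow> 'c pmf"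
    and f :: "'a \<Rightarrow> (nat \<Rightarrow> 'c) \<Rightarrow> real" and a :: 'a and N :: nat and e :: real
  assumes continuous_payoff: "continuous_map plays_topology euclideanreal (f a)"
    and horizon: "\<And>x y. \<forall>i<N. x i = y i \<Longrightarrow> \<bar>f a x - f a y\<bar> \<le> e"
begin

lemma payoff_beyond_horizon:
  assumes "N \<le> length w"
  shows "\<bar>payoff d P f \<sigma> w a - f a (pad_history w)\<bar> \<le> e"
  using continuous_payoff
  by (rule abs_payoff_diff_const_le)
    (use assms in \<open>auto intro!: horizon simp: pad_history_def play_nth_prefix\<close>)

lemma payoff_le_backward_value:
  assumes others: "\<And>b. b \<noteq> a \<Longrightarrow> \<sigma> b = backward_profile d P f N b"
  shows "length w + k = N \<Longrightarrow> payoff d P f \<sigma> w a \<le> backward_value d P f k w a + e"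
proof (induction k arbitrary: w)
  case 0
  then show ?case
    using payoff_beyond_horizon[of w \<sigma>] by simp
next
  case (Suc k)
  show ?case
  proof (cases "d w")
    case None
    have "payoff d P f \<sigma> w a = (\<integral>c. payoff d P f \<sigma> (w @ [c]) a \<partial>measure_pmf (P w))"
      using continuous_payoff None by (rule payoff_nature_move)
    also have "\<dots> \<le> (\<integral>c. backward_value d P f k (w @ [c]) a + e \<partial>measure_pmf (P w))"
      using Suc by (intro integral_mono) (simp_all add: integrable_measure_pmf_finite)
    also have "\<dots> = backward_value d P f (Suc k) w a + e"
      by (simp add: None integrable_measure_pmf_finite measure_pmf.prob_space)
    finally show ?thesis .
  next
    case (Some b)
    let ?c = "backward_profile d P f N b w"
    have value_Suc: "backward_value d P f (Suc k) w a = backward_value d P f k (w @ [?c]) a"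
      using Some Suc.prems by (rule backward_value_Suc_player)
    have "backward_value d P f k (w @ [\<sigma> b w]) a \<le> backward_value d P f k (w @ [?c]) a"
    proof (cases "b = a")
      case True
      then show ?thesis
        using backward_profile_best_reply[OF Suc.prems] by simp
    next
      case False
      then show ?thesis
        using others by simp
    qed
    moreover have "payoff d P f \<sigma> w a = payoff d P f \<sigma> (w @ [\<sigma> b w]) a"
      using Some by (rule payoff_player_move)
    moreover have "payoff d P f \<sigma> (w @ [\<sigma> b w]) a \<le> backward_value d P f k (w @ [\<sigma> b w]) a + e"
      using Suc.prems by (intro Suc.IH) simp
    ultimately show ?thesis
      unfolding value_Suc by linarith
  qed
qed

lemma backward_value_le_payoff:
  "length w + k = N \<Longrightarrow> backward_value d P f k w a - e \<le> payoff d P f (backward_profile d P f N) w a"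
proof (induction k arbitrary: w)
  case 0
  then show ?case
    using payoff_beyond_horizon[of w "backward_profile d P f N"] by simp
next
  case (Suc k)
  let ?\<sigma> = "backward_profile d P f N"
  show ?case
  proof (cases "d w")
    case None
    have "backward_value d P f (Suc k) w a - e
        = (\<integral>c. backward_value d P f k (w @ [c]) a - e \<partial>measure_pmf (P w))"
      by (simp add: None integrable_measure_pmf_finite measure_pmf.prob_space)
    also have "\<dots> \<le> (\<integral>c. payoff d P f ?\<sigma> (w @ [c]) a \<partial>measure_pmf (P w))"
      using Suc by (intro integral_mono) (simp_all add: integrable_measure_pmf_finite)
    also have "\<dots> = payoff d P f ?\<sigma> w a"
      using continuous_payoff None by (rule payoff_nature_move[symmetric])
    finally show ?thesis .
  next
    case (Some b)
    let ?c = "backward_profile d P f N b w"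
    have "backward_value d P f (Suc k) w a = backward_value d P f k (w @ [?c]) a"
      using Some Suc.prems by (rule backward_value_Suc_player)
    moreover have "payoff d P f ?\<sigma> w a = payoff d P f ?\<sigma> (w @ [?c]) a"
      using Some by (rule payoff_player_move)
    moreover have "backward_value d P f k (w @ [?c]) a - e \<le> payoff d P f ?\<sigma> (w @ [?c]) a"
      using Suc.prems by (intro Suc.IH) simp
    ultimately show ?thesis
      by linarith
  qed
qed

lemma backward_profile_deviation_le:
  "payoff d P f ((backward_profile d P f N)(a := s)) w a \<le> payoff d P f (backward_profile d P f N) w a + 2 * e"
proof (cases "length w \<le> N")
  case True
  then have "length w + (N - length w) = N"
    by simp
  from payoff_le_backward_value[OF _ this, of "(backward_profile d P f N)(a := s)"]
    backward_value_le_payoff[OF this]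
  show ?thesis
    by simp
next
  case False
  then show ?thesis
    using payoff_beyond_horizon[of w "(backward_profile d P f N)(a := s)"]
      payoff_beyond_horizon[of w "backward_profile d P f N"]
    by simp
qed

end

section \<open>Approximate equilibria and compactness\<close>

definition approx_subgame_perfect ::
  "('c list \<Rightarrow> 'a option) \<Rightarrow> ('c list \<Rightarrow> 'c pmf) \<Rightarrow> ('a \<Rightarrow> (nat \<Rightarrow> 'c) \<Rightarrow> real)
    \<Rightarrow> 'a set \<Rightarrow> real \<Rightarrow> ('a \<Rightarrow> 'c list \<Rightarrow> 'c) \<Rightarrow> bool" where
  "approx_subgame_perfect d P f F \<epsilon> \<sigma> \<longleftrightarrow>
     (\<forall>\<gamma>. \<forall>a\<in>F. \<forall>s. payoff d P f (\<sigma>(a := s)) \<gamma> a \<le> payoff d P f \<sigma> \<gamma> a + \<epsilon>)"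

lemma approx_subgame_perfect_mono:
  assumes "approx_subgame_perfect d P f F \<epsilon> \<sigma>" and "G \<subseteq> F" and "\<epsilon> \<le> \<delta>"
  shows "approx_subgame_perfect d P f G \<delta> \<sigma>"
  unfolding approx_subgame_perfect_def
proof (intro allI ballI)
  fix \<gamma> a s
  assume "a \<in> G"
  with assms(1,2) have "payoff d P f (\<sigma>(a := s)) \<gamma> a \<le> payoff d P f \<sigma> \<gamma> a + \<epsilon>"
    unfolding approx_subgame_perfect_def by blast
  with assms(3) show "payoff d P f (\<sigma>(a := s)) \<gamma> a \<le> payoff d P f \<sigma> \<gamma> a + \<delta>"
    by linarith
qed

lemma subgame_perfect_iff_approx:
  "subgame_perfect d P f \<sigma> \<longleftrightarrow> (\<forall>a \<epsilon>. \<epsilon> > 0 \<longrightarrow> approx_subgame_perfect d P f {a} \<epsilon> \<sigma>)"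
proof
  assume "subgame_perfect d P f \<sigma>"
  then show "\<forall>a \<epsilon>. \<epsilon> > 0 \<longrightarrow> approx_subgame_perfect d P f {a} \<epsilon> \<sigma>"
    unfolding subgame_perfect_def approx_subgame_perfect_def by (meson add_increasing2 less_le not_le)
next
  assume approx: "\<forall>a \<epsilon>. \<epsilon> > 0 \<longrightarrow> approx_subgame_perfect d P f {a} \<epsilon> \<sigma>"
  show "subgame_perfect d P f \<sigma>"
    unfolding subgame_perfect_def
  proof (intro allI notI)
    fix \<gamma> a s
    define gap where "gap = payoff d P f (\<sigma>(a := s)) \<gamma> a - payoff d P f \<sigma> \<gamma> a"
    assume "payoff d P f (\<sigma>(a := s)) \<gamma> a > payoff d P f \<sigma> \<gamma> a"
    then have "gap > 0"
      by (simp add: gap_def)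
    with approx have "payoff d P f (\<sigma>(a := s)) \<gamma> a \<le> payoff d P f \<sigma> \<gamma> a + gap / 2"
      unfolding approx_subgame_perfect_def by simp
    with \<open>gap > 0\<close> gap_def show False
      by linarith
  qed
qed

lemma approx_subgame_perfect_exists:
  fixes d :: "'c::finite list \<Rightarrow> 'a option"
  assumes cont: "\<And>a. continuous_map plays_topology euclideanreal (f a)"
    and "finite F" and "\<epsilon> > 0"
  shows "\<exists>\<sigma>. approx_subgame_perfect d P f F \<epsilon> \<sigma>"
proof -
  have "\<exists>N. \<forall>a\<in>F. \<forall>x y. (\<forall>i<N. x i = y i) \<longrightarrow> \<bar>f a x - f a y\<bar> < \<epsilon>/2"
    by (rule continuous_plays_uniformly_finite) (use \<open>finite F\<close> cont \<open>\<epsilon> > 0\<close> in auto)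
  then obtain N where N: "\<forall>a\<in>F. \<forall>x y. (\<forall>i<N. x i = y i) \<longrightarrow> \<bar>f a x - f a y\<bar> < \<epsilon>/2"
    by blast
  have "approx_subgame_perfect d P f F \<epsilon> (backward_profile d P f N)"
    unfolding approx_subgame_perfect_def
  proof (intro allI ballI)
    fix \<gamma> a s
    assume "a \<in> F"
    have "\<bar>f a x - f a y\<bar> \<le> \<epsilon>/2" if "\<forall>i<N. x i = y i" for x y
    proof -
      from N \<open>a \<in> F\<close> that have "\<bar>f a x - f a y\<bar> < \<epsilon>/2"
        by blast
      then show ?thesis
        by simp
    qed
    from backward_profile_deviation_le[where f = f and a = a, OF cont this]
    show "payoff d P f ((backward_profile d P f N)(a := s)) \<gamma> a
        \<le> payoff d P f (backward_profile d P f N) \<gamma> a + \<epsilon>"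
      by simp
  qed
  then show ?thesis
    by blast
qed

definition profile_topology :: "('a \<Rightarrow> 'c list \<Rightarrow> 'c) topology" where
  "profile_topology = product_topology (\<lambda>_. product_topology (\<lambda>_. discrete_topology UNIV) UNIV) UNIV"

lemma topspace_profile_topology [simp]: "topspace profile_topology = UNIV"
  by (simp add: profile_topology_def)

lemma compact_space_profile_topology:
  "compact_space (profile_topology :: ('a \<Rightarrow> 'c::finite list \<Rightarrow> 'c) topology)"
  by (simp add: profile_topology_def compact_space_product_topology compact_space_discrete_topology)

lemma continuous_map_profile_move:
  "continuous_map profile_topology (discrete_topology UNIV) (\<lambda>\<sigma>. \<sigma> b w)"
  using continuous_map_compose[OF
      continuous_map_product_projection[of b UNIV "\<lambda>_. product_topology (\<lambda>_. discrete_topology UNIV) UNIV"]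
      continuous_map_product_projection[of w UNIV "\<lambda>_. discrete_topology UNIV"]]
  by (simp add: profile_topology_def comp_def)

lemma continuous_map_profile_fun_upd:
  "continuous_map profile_topology profile_topology (\<lambda>\<sigma>. \<sigma>(a := s))"
proof -
  have "continuous_map profile_topology (product_topology (\<lambda>_. discrete_topology UNIV) UNIV) (\<lambda>\<sigma>. \<sigma> b)"
    for b
    unfolding profile_topology_def by (rule continuous_map_product_projection) simp
  then have "continuous_map profile_topology (product_topology (\<lambda>_. discrete_topology UNIV) UNIV)
      (\<lambda>\<sigma>. (\<sigma>(a := s)) b)" for b
    by (cases "b = a") simp_all
  then have "continuous_map profile_topology
      (product_topology (\<lambda>_. product_topology (\<lambda>_. discrete_topology UNIV) UNIV) UNIV) (\<lambda>\<sigma>. \<sigma>(a := s))"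
    unfolding continuous_map_componentwise_UNIV[of profile_topology
        "\<lambda>_. product_topology (\<lambda>_. discrete_topology UNIV) UNIV"]
    by blast
  then show ?thesis
    by (simp only: profile_topology_def)
qed

lemma continuous_map_payoff:
  fixes d :: "'c::finite list \<Rightarrow> 'a option"
  assumes cont: "continuous_map plays_topology euclideanreal (f a)"
  shows "continuous_map profile_topology euclideanreal (\<lambda>\<sigma>. payoff d P f \<sigma> \<gamma> a)"
  unfolding mtopology_is_euclidean[symmetric] Met_TC.continuous_map_to_metric
proof (intro ballI allI impI)
  fix \<sigma>0 :: "'a \<Rightarrow> 'c list \<Rightarrow> 'c" and \<epsilon> :: real
  assume "\<epsilon> > 0"
  obtain L where L: "\<And>x y. \<forall>i<L. x i = y i \<Longrightarrow> \<bar>f a x - f a y\<bar> < \<epsilon>/2"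
    using continuous_plays_uniformly[OF cont, of "\<epsilon>/2"] \<open>\<epsilon> > 0\<close> by auto
  \<comment> \<open>Up to \<open>\<epsilon>/2\<close> the payoff only depends on the moves at the finitely many player positions
    of length below \<open>L\<close>.\<close>
  define J where "J = {(b, w). length w < L \<and> d w = Some b}"
  have "finite {w :: 'c list. length w < L}"
    using finite_lists_length_le[of "UNIV :: 'c set" L] by (rule rev_finite_subset) auto
  then have "finite J"
  proof (rule rev_finite_subset[OF finite_imageI[where h = "\<lambda>w. (the (d w), w)"]], clarsimp simp: J_def)
    fix b w
    assume "length w < L" "d w = Some b"
    then show "(b, w) \<in> (\<lambda>w. (the (d w), w)) ` {w. length w < L}"
      by (intro image_eqI[where x = w]) simp_all
  qed
  define U where "U = {\<sigma> \<in> topspace profile_topology. \<forall>j\<in>J. \<sigma> (fst j) (snd j) = \<sigma>0 (fst j) (snd j)}"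
  have "openin profile_topology U"
    unfolding U_def using \<open>finite J\<close> by (rule openin_agree_finite) (rule continuous_map_profile_move)
  moreover have "\<sigma>0 \<in> U"
    by (simp add: U_def)
  moreover have "\<bar>payoff d P f \<sigma> \<gamma> a - payoff d P f \<sigma>0 \<gamma> a\<bar> < \<epsilon>" if "\<sigma> \<in> U" for \<sigma>
  proof -
    have "next_move d \<sigma> X w = next_move d \<sigma>0 X w" if "length w < L" for X w
      using \<open>\<sigma> \<in> U\<close> that by (auto simp: U_def J_def next_move_def split: option.split)
    then have "play d \<sigma> \<gamma> X i = play d \<sigma>0 \<gamma> X i" if "i < L" for X i
      using that by (intro play_cong) auto
    then have "\<bar>payoff d P f \<sigma> \<gamma> a - payoff d P f \<sigma>0 \<gamma> a\<bar> \<le> \<epsilon>/2"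
      using L by (intro abs_payoff_diff_le[where f = f and a = a, OF cont] less_imp_le) auto
    with \<open>\<epsilon> > 0\<close> show ?thesis
      by linarith
  qed
  ultimately show "\<exists>U. openin profile_topology U \<and> \<sigma>0 \<in> U \<and>
      (\<forall>\<sigma>\<in>U. payoff d P f \<sigma> \<gamma> a \<in> Met_TC.mball (payoff d P f \<sigma>0 \<gamma> a) \<epsilon>)"
    by (auto simp: dist_real_def abs_minus_commute)
qed

lemma closedin_approx_subgame_perfect:
  fixes d :: "'c::finite list \<Rightarrow> 'a option"
  assumes cont: "\<And>a. continuous_map plays_topology euclideanreal (f a)"
  shows "closedin profile_topology {\<sigma>. approx_subgame_perfect d P f F \<epsilon> \<sigma>}"
proof (cases "F = {}")
  case True
  then show ?thesis
    using closedin_topspace[of profile_topology] by (simp add: approx_subgame_perfect_def)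
next
  case False
  have "closedin profile_topology {\<sigma>. payoff d P f (\<sigma>(a := s)) \<gamma> a \<le> payoff d P f \<sigma> \<gamma> a + \<epsilon>}"
    for \<gamma> a s
  proof -
    have "continuous_map profile_topology euclideanreal (\<lambda>\<sigma>. payoff d P f (\<sigma>(a := s)) \<gamma> a)"
      using continuous_map_compose[OF continuous_map_profile_fun_upd continuous_map_payoff[OF cont]]
      by (simp add: comp_def)
    then have "continuous_map profile_topology euclideanreal
        (\<lambda>\<sigma>. payoff d P f (\<sigma>(a := s)) \<gamma> a - payoff d P f \<sigma> \<gamma> a)"
      by (intro continuous_map_diff continuous_map_payoff[OF cont])
    then have "closedin profile_topology {\<sigma> \<in> topspace profile_topology.
        payoff d P f (\<sigma>(a := s)) \<gamma> a - payoff d P f \<sigma> \<gamma> a \<in> {..\<epsilon>}}"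
      by (rule closedin_continuous_map_preimage) (simp flip: closed_closedin)
    moreover have "{\<sigma> \<in> topspace profile_topology.
        payoff d P f (\<sigma>(a := s)) \<gamma> a - payoff d P f \<sigma> \<gamma> a \<in> {..\<epsilon>}}
      = {\<sigma>. payoff d P f (\<sigma>(a := s)) \<gamma> a \<le> payoff d P f \<sigma> \<gamma> a + \<epsilon>}"
      by auto
    ultimately show ?thesis
      by simp
  qed
  moreover have "{\<sigma>. approx_subgame_perfect d P f F \<epsilon> \<sigma>}
      = (\<Inter>(\<gamma>, a, s) \<in> UNIV \<times> F \<times> UNIV. {\<sigma>. payoff d P f (\<sigma>(a := s)) \<gamma> a \<le> payoff d P f \<sigma> \<gamma> a + \<epsilon>})"
    by (auto simp: approx_subgame_perfect_def)
  ultimately show ?thesis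
    using False by (auto intro!: closedin_INT)
qed

lemma approx_subgame_perfect_finite_Inter:
  assumes "finite \<A>" and "\<A> \<subseteq> {{\<sigma>. approx_subgame_perfect d P f F \<epsilon> \<sigma>} | F \<epsilon>. finite F \<and> \<epsilon> > 0}"
  shows "\<exists>F \<epsilon>. finite F \<and> \<epsilon> > 0 \<and> {\<sigma>. approx_subgame_perfect d P f F \<epsilon> \<sigma>} \<subseteq> \<Inter>\<A>"
  using assms
proof (induction rule: finite_induct)
  case empty
  show ?case
    by (rule exI[of _ "{}"], rule exI[of _ 1]) simp
next
  case (insert A \<A>)
  then obtain F \<epsilon> where F: "finite F" "\<epsilon> > 0" "{\<sigma>. approx_subgame_perfect d P f F \<epsilon> \<sigma>} \<subseteq> \<Inter>\<A>"
    by auto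
  obtain G \<delta> where G: "finite G" "\<delta> > 0" "A = {\<sigma>. approx_subgame_perfect d P f G \<delta> \<sigma>}"
    using insert.prems by auto
  have "{\<sigma>. approx_subgame_perfect d P f (F \<union> G) (min \<epsilon> \<delta>) \<sigma>} \<subseteq> \<Inter>(insert A \<A>)"
    using F(3) G(3) approx_subgame_perfect_mono[of d P f "F \<union> G" "min \<epsilon> \<delta>" _ F \<epsilon>]
      approx_subgame_perfect_mono[of d P f "F \<union> G" "min \<epsilon> \<delta>" _ G \<delta>]
    by auto
  then show ?case
    using F G by (intro exI[of _ "F \<union> G"] exI[of _ "min \<epsilon> \<delta>"]) simp
qed

theorem corollary12:
  fixes d :: "'c::finite list \<Rightarrow> 'a::countable option"
    and P :: "'c list \<Rightarrow> 'c pmf"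
    and f :: "'a \<Rightarrow> (nat \<Rightarrow> 'c) \<Rightarrow> real"
  assumes "\<And>a. continuous_map plays_topology euclideanreal (f a)"
    and "\<And>a x. f a x \<in> {0..1}"
  shows "\<exists>\<sigma>. subgame_perfect d P f \<sigma>"
proof -
  let ?\<U> = "{{\<sigma>. approx_subgame_perfect d P f F \<epsilon> \<sigma>} | F \<epsilon>. finite F \<and> \<epsilon> > 0}"
  have "closedin profile_topology {\<sigma>. approx_subgame_perfect d P f F \<epsilon> \<sigma>}" for F \<epsilon>
    using assms(1) by (rule closedin_approx_subgame_perfect)
  then have "\<forall>C\<in>?\<U>. closedin profile_topology C"
    by blast
  moreover have "\<forall>\<A>. finite \<A> \<and> \<A> \<subseteq> ?\<U> \<longrightarrow> \<Inter>\<A> \<noteq> {}"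
  proof (intro allI impI)
    fix \<A>
    assume "finite \<A> \<and> \<A> \<subseteq> ?\<U>"
    then obtain F \<epsilon> where "finite F" "\<epsilon> > 0" and F: "{\<sigma>. approx_subgame_perfect d P f F \<epsilon> \<sigma>} \<subseteq> \<Inter>\<A>"
      using approx_subgame_perfect_finite_Inter[of \<A> d P f] by blast
    have "\<exists>\<sigma>. approx_subgame_perfect d P f F \<epsilon> \<sigma>"
      using assms(1) \<open>finite F\<close> \<open>\<epsilon> > 0\<close> by (rule approx_subgame_perfect_exists)
    with F show "\<Inter>\<A> \<noteq> {}"
      by blast
  qed
  ultimately have "\<Inter>?\<U> \<noteq> {}"
    using compact_space_profile_topology[unfolded compact_space_fip, THEN spec[of _ ?\<U>]] by blast
  then obtain \<sigma> where \<sigma>: "\<sigma> \<in> \<Inter>?\<U>"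
    by blast
  have "approx_subgame_perfect d P f {a} \<epsilon> \<sigma>" if "\<epsilon> > 0" for a \<epsilon>
  proof -
    have "{\<sigma>. approx_subgame_perfect d P f {a} \<epsilon> \<sigma>} \<in> ?\<U>"
      using that by (intro CollectI exI[of _ "{a}"] exI[of _ \<epsilon>]) simp
    with \<sigma> show ?thesis
      by blast
  qed
  then have "subgame_perfect d P f \<sigma>"
    by (simp add: subgame_perfect_iff_approx)
  then show ?thesis
    by blast
qed

end
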